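(* Let $A$ be an AUF algebra, let $M\in\mathrm{Coh}_{\mathrm L}(A)$, and let $B=\mathrm{End}_{A,-}(M)^{\mathrm{op}}$. Then for each generating idempotent $p\in B$, the map $$\mathrm{End}^0_{-,B}(M)\to\mathrm{End}^0_{-,pBp}(Mp),\qquad S\mapsto S|_{Mp}$$ is a well-defined linear isomorphism.
   Context: All algebras are associative $\mathbb C$-algebras, not necessarily unital. An idempotent is $e$ with $e^2=e$. An algebra $A$ is AUF if there is a family $(e_i)_{i\in\mathfrak I}$ of mutually orthogonal idempotents with $\dim e_iAe_j<\infty$ and $A=\sum_{i,j}e_iAe_j$. A left $A$-module $M$ is quasicoherent if $\xi\in A\xi$ for all $\xi\in M$, coherent if moreover finitely generated; $\mathrm{Coh}_{\mathrm L}(A)$ is the category of coherent left $A$-modules. $B=\mathrm{End}_{A,-}(M)^{\mathrm{op}}$ (a finite-dimensional unital algebra) acts on $M$ on the right by $\xi\cdot T=T(\xi)$; $Mp=\{\xi p:\xi\in M\}$ is a quasicoherent left $A$-submodule with a right $pBp$-action. Irreducible means nonzero with no nonzero proper submodules; for a finite-dimensional unital algebra $B$, an idempotent $p\in B$ is generating if every irreducible left $B$-module on which $1_B$ acts as identity is a quotient of $Bp$. For a quasicoherent left $A$-module $N$: $N^\vee$ is the space of linear functionals $\varphi$ on $N$ for which there is an idempotent $e\in A$ with $\varphi(e\eta)=\varphi(\eta)$ for all $\eta$; $\mathrm{End}^0(N)$ is the span in $\mathrm{End}(N)$ of the operators $\eta\mapsto\varphi(\eta)\xi$ with $\xi\in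 N,\varphi\in N^\vee$; if $N$ carries a right action of an algebra $C$ commuting with $A$, $\mathrm{End}^0_{-,C}(N)=\{T\in\mathrm{End}^0(N): T(\xi c)=T(\xi)c\ \forall \xi,c\}$. *)

theory Defs
  imports Complex_Main "HOL-Library.Function_Algebras"
begin

text \<open>The algebra A is the whole of a type 'a of class ring (associative, not
  necessarily unital), with complex scalar multiplication sA.  The module M is the
  whole of a type 'm, with complex scalar multiplication sM and left A-action act.\<close>

definition cx_algebra :: "(complex \<Rightarrow> 'a::ring \<Rightarrow> 'a) \<Rightarrow> bool" where
  "cx_algebra sA \<longleftrightarrow> vector_space sA \<and>
     (\<forall>c a b. sA c (a * b) = sA c a * b \<and> sA c (a * b) = a * sA c b)"

definition fin_dim_sub :: "(complex \<Rightarrow> 'b::ab_group_add \<Rightarrow> 'b) \<Rightarrow> 'b set \<Rightarrow> bool" where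
  "fin_dim_sub s S \<longleftrightarrow> (\<exists>F. finite F \<and> module.span s F = S)"

text \<open>AUF: a family of mutually orthogonal idempotents (written as a set E; repeated
  members of a family of mutually orthogonal idempotents are necessarily 0).\<close>
definition AUF :: "(complex \<Rightarrow> 'a::ring \<Rightarrow> 'a) \<Rightarrow> bool" where
  "AUF sA \<longleftrightarrow> (\<exists>E::'a set.
     (\<forall>e\<in>E. e * e = e) \<and>
     (\<forall>e\<in>E. \<forall>f\<in>E. e \<noteq> f \<longrightarrow> e * f = 0) \<and>
     (\<forall>e\<in>E. \<forall>f\<in>E. fin_dim_sub sA {e * a * f | a. True}) \<and>
     module.span sA (\<Union>e\<in>E. \<Union>f\<in>E. {e * a * f | a. True}) = UNIV)"

definition left_module ::
  "(complex \<Rightarrow> 'a::ring \<Rightarrow> 'a) \<Rightarrow> (complex \<Rightarrow> 'm::ab_group_add \<Rightarrow> 'm) \<Rightarrow> ('a \<Rightarrow> 'm \<Rightarrow> 'm) \<Rightarrow> bool" where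
  "left_module sA sM act \<longleftrightarrow> vector_space sM \<and>
     (\<forall>a b x. act (a + b) x = act a x + act b x) \<and>
     (\<forall>a x y. act a (x + y) = act a x + act a y) \<and>
     (\<forall>c a x. act (sA c a) x = sM c (act a x) \<and> act a (sM c x) = sM c (act a x)) \<and>
     (\<forall>a b x. act (a * b) x = act a (act b x))"

definition A_submodule ::
  "(complex \<Rightarrow> 'm::ab_group_add \<Rightarrow> 'm) \<Rightarrow> ('a \<Rightarrow> 'm \<Rightarrow> 'm) \<Rightarrow> 'm set \<Rightarrow> bool" where
  "A_submodule sM act N \<longleftrightarrow> module.subspace sM N \<and> (\<forall>a. \<forall>x\<in>N. act a x \<in> N)"

definition quasicoherent_on ::
  "('a \<Rightarrow> 'm \<Rightarrow> 'm) \<Rightarrow> 'm set \<Rightarrow> bool" where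
  "quasicoherent_on act N \<longleftrightarrow> (\<forall>\<xi>\<in>N. \<exists>a. act a \<xi> = \<xi>)"

definition coherent ::
  "(complex \<Rightarrow> 'm::ab_group_add \<Rightarrow> 'm) \<Rightarrow> ('a \<Rightarrow> 'm \<Rightarrow> 'm) \<Rightarrow> bool" where
  "coherent sM act \<longleftrightarrow> quasicoherent_on act UNIV \<and>
     (\<exists>F. finite F \<and> (\<forall>N. A_submodule sM act N \<and> F \<subseteq> N \<longrightarrow> N = UNIV))"

text \<open>B = End_{A,-}(M)^op, as a set of maps M -> M; the product b1 b2 in B is
  the composition b2 o b1, the unit is id, and the right action is xi . T = T xi.\<close>
definition Bset ::
  "(complex \<Rightarrow> 'm::ab_group_add \<Rightarrow> 'm) \<Rightarrow> ('a \<Rightarrow> 'm \<Rightarrow> 'm) \<Rightarrow> ('m \<Rightarrow> 'm) set" where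
  "Bset sM act = {T. (\<forall>x y. T (x + y) = T x + T y) \<and> (\<forall>c x. T (sM c x) = sM c (T x)) \<and>
                     (\<forall>a x. T (act a x) = act a (T x))}"

definition sF :: "(complex \<Rightarrow> 'm \<Rightarrow> 'm) \<Rightarrow> complex \<Rightarrow> ('x \<Rightarrow> 'm) \<Rightarrow> ('x \<Rightarrow> 'm)" where
  "sF sM c T = (\<lambda>x. sM c (T x))"

text \<open>pBp = \{p b p\}; since the product in B is reversed composition, p b p is p o b o p.\<close>
definition pBp ::
  "(complex \<Rightarrow> 'm::ab_group_add \<Rightarrow> 'm) \<Rightarrow> ('a \<Rightarrow> 'm \<Rightarrow> 'm) \<Rightarrow> ('m \<Rightarrow> 'm) \<Rightarrow> ('m \<Rightarrow> 'm) set" where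
  "pBp sM act p = {p \<circ> b \<circ> p | b. b \<in> Bset sM act}"

text \<open>Unital left B-module structure (B a set of maps with the reversed-composition
  product, unit id, pointwise linear structure) on a subspace V of a complex vector
  space 'v with scalar multiplication sV and action beta.\<close>
definition B_lmodule ::
  "('m \<Rightarrow> 'm) set \<Rightarrow> (complex \<Rightarrow> 'm::ab_group_add \<Rightarrow> 'm) \<Rightarrow>
   (complex \<Rightarrow> 'v::ab_group_add \<Rightarrow> 'v) \<Rightarrow> 'v set \<Rightarrow> (('m \<Rightarrow> 'm) \<Rightarrow> 'v \<Rightarrow> 'v) \<Rightarrow> bool" where
  "B_lmodule B sM sV V \<beta> \<longleftrightarrow> vector_space sV \<and> module.subspace sV V \<and>
     (\<forall>b\<in>B. \<forall>v\<in>V. \<beta> b v \<in> V) \<and>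
     (\<forall>b1\<in>B. \<forall>b2\<in>B. \<forall>v\<in>V. \<beta> (b1 + b2) v = \<beta> b1 v + \<beta> b2 v) \<and>
     (\<forall>c. \<forall>b\<in>B. \<forall>v\<in>V. \<beta> (sF sM c b) v = sV c (\<beta> b v)) \<and>
     (\<forall>b\<in>B. \<forall>v\<in>V. \<forall>w\<in>V. \<beta> b (v + w) = \<beta> b v + \<beta> b w) \<and>
     (\<forall>c. \<forall>b\<in>B. \<forall>v\<in>V. \<beta> b (sV c v) = sV c (\<beta> b v)) \<and>
     (\<forall>b1\<in>B. \<forall>b2\<in>B. \<forall>v\<in>V. \<beta> (b2 \<circ> b1) v = \<beta> b1 (\<beta> b2 v)) \<and>
     (\<forall>v\<in>V. \<beta> id v = v)"

definition B_irreducible ::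
  "('m \<Rightarrow> 'm) set \<Rightarrow> (complex \<Rightarrow> 'v::ab_group_add \<Rightarrow> 'v) \<Rightarrow> 'v set \<Rightarrow> (('m \<Rightarrow> 'm) \<Rightarrow> 'v \<Rightarrow> 'v) \<Rightarrow> bool" where
  "B_irreducible B sV V \<beta> \<longleftrightarrow> V \<noteq> {0} \<and>
     (\<forall>W. W \<subseteq> V \<and> module.subspace sV W \<and> (\<forall>b\<in>B. \<forall>w\<in>W. \<beta> b w \<in> W)
          \<longrightarrow> W = {0} \<or> W = V)"

text \<open>V is a quotient of the left B-module Bp = \{b p\} = \{p o b\}, on which
  b' acts by x |-> b' x = x o b'.\<close>
definition quotient_of_Bp ::
  "('m \<Rightarrow> 'm) set \<Rightarrow> (complex \<Rightarrow> 'm::ab_group_add \<Rightarrow> 'm) \<Rightarrow> ('m \<Rightarrow> 'm) \<Rightarrow>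
   (complex \<Rightarrow> 'v::ab_group_add \<Rightarrow> 'v) \<Rightarrow> 'v set \<Rightarrow> (('m \<Rightarrow> 'm) \<Rightarrow> 'v \<Rightarrow> 'v) \<Rightarrow> bool" where
  "quotient_of_Bp B sM p sV V \<beta> \<longleftrightarrow>
     (\<exists>f. (\<forall>x\<in>{p \<circ> b | b. b \<in> B}. \<forall>y\<in>{p \<circ> b | b. b \<in> B}. f (x + y) = f x + f y) \<and>
          (\<forall>c. \<forall>x\<in>{p \<circ> b | b. b \<in> B}. f (sF sM c x) = sV c (f x)) \<and>
          (\<forall>b'\<in>B. \<forall>x\<in>{p \<circ> b | b. b \<in> B}. f (x \<circ> b') = \<beta> b' (f x)) \<and>
          f ` {p \<circ> b | b. b \<in> B} = V)"

text \<open>Test modules live in subspaces of the complex vector space nat => complex;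
  every irreducible unital module over the finite-dimensional algebra B is
  finite-dimensional and hence isomorphic to such a one.\<close>
definition sV :: "complex \<Rightarrow> (nat \<Rightarrow> complex) \<Rightarrow> (nat \<Rightarrow> complex)" where
  "sV c v = (\<lambda>n. c * v n)"

definition generating ::
  "(complex \<Rightarrow> 'm::ab_group_add \<Rightarrow> 'm) \<Rightarrow> ('a \<Rightarrow> 'm \<Rightarrow> 'm) \<Rightarrow> ('m \<Rightarrow> 'm) \<Rightarrow> bool" where
  "generating sM act p \<longleftrightarrow>
     (\<forall>(V::(nat \<Rightarrow> complex) set) \<beta>.
        B_lmodule (Bset sM act) sM sV V \<beta> \<and> B_irreducible (Bset sM act) sV V \<beta>
        \<longrightarrow> quotient_of_Bp (Bset sM act) sM p sV V \<beta>)"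

definition dual_on ::
  "(complex \<Rightarrow> 'm::ab_group_add \<Rightarrow> 'm) \<Rightarrow> ('a::ring \<Rightarrow> 'm \<Rightarrow> 'm) \<Rightarrow> 'm set \<Rightarrow> ('m \<Rightarrow> complex) set" where
  "dual_on sM act N = {\<phi>. (\<forall>x\<in>N. \<forall>y\<in>N. \<phi> (x + y) = \<phi> x + \<phi> y) \<and>
       (\<forall>c. \<forall>x\<in>N. \<phi> (sM c x) = c * \<phi> x) \<and>
       (\<exists>e. e * e = e \<and> (\<forall>\<eta>\<in>N. \<phi> (act e \<eta>) = \<phi> \<eta>))}"

text \<open>Operators on N are represented as maps 'm => 'm vanishing outside N.\<close>
definition rank1_on :: "(complex \<Rightarrow> 'm::ab_group_add \<Rightarrow> 'm) \<Rightarrow> 'm set \<Rightarrow> ('m \<Rightarrow> complex) \<Rightarrow> 'm \<Rightarrow> ('m \<Rightarrow> 'm)" where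
  "rank1_on sM N \<phi> \<xi> = (\<lambda>\<eta>. if \<eta> \<in> N then sM (\<phi> \<eta>) \<xi> else 0)"

definition End0 ::
  "(complex \<Rightarrow> 'm::ab_group_add \<Rightarrow> 'm) \<Rightarrow> ('a::ring \<Rightarrow> 'm \<Rightarrow> 'm) \<Rightarrow> 'm set \<Rightarrow> ('m \<Rightarrow> 'm) set" where
  "End0 sM act N = module.span (sF sM)
     {rank1_on sM N \<phi> \<xi> | \<phi> \<xi>. \<phi> \<in> dual_on sM act N \<and> \<xi> \<in> N}"

text \<open>End^0_{-,C}(N) where C is a set of maps acting on the right of N by xi . c = c xi.\<close>
definition End0_C ::
  "(complex \<Rightarrow> 'm::ab_group_add \<Rightarrow> 'm) \<Rightarrow> ('a::ring \<Rightarrow> 'm \<Rightarrow> 'm) \<Rightarrow> 'm set \<Rightarrow> ('m \<Rightarrow> 'm) set \<Rightarrow> ('m \<Rightarrow> 'm) set" where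
  "End0_C sM act N C = {T \<in> End0 sM act N. \<forall>\<xi>\<in>N. \<forall>c\<in>C. T (c \<xi>) = c (T \<xi>)}"

definition restrict_to :: "'m set \<Rightarrow> ('m \<Rightarrow> 'm::zero) \<Rightarrow> ('m \<Rightarrow> 'm)" where
  "restrict_to N S = (\<lambda>x. if x \<in> N then S x else 0)"

end

(*
  Since M is coherent over an AUF
  algebra, a local unit e fixes a finite generating set F of M and eAe is finite-dimensional,
  so B embeds into the finite-dimensional space of maps F -> act e M. If the ideal BpB were
  proper, the dual of B/BpB would be a nonzero finite-dimensional B-module killed by p; a
  minimal nonzero submodule of it is irreducible but not a quotient of Bp, contradicting that
  p is generating. Hence id = \<Sum>k. c_k \<circ> p \<circ> b_k with b_k, c_k in B. This makes
  S |-> S|_Mp injective, and T |-> \<Sum>k. c_k \<circ> T \<circ> p \<circ> b_k is its inverse: it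
  commutes with B because T commutes with the corner pBp.
*)
theory Submission
  imports Defs
begin

lemma vector_space_sF: "vector_space sM \<Longrightarrow> vector_space (sF sM)"
  unfolding vector_space_def sF_def by (auto simp: fun_eq_iff)

lemma sum_fun_apply: "(sum f S) x = (\<Sum>i\<in>S. f i x)"
  by (induction S rule: infinite_finite_induct) auto

lemma restrict_to_add:
  fixes S S' :: "'m \<Rightarrow> 'm::monoid_add"
  shows "restrict_to N (S + S') = restrict_to N S + restrict_to N S'"
  by (simp add: restrict_to_def fun_eq_iff)

lemma vector_space_complex_mult: "vector_space ((*) :: complex \<Rightarrow> complex \<Rightarrow> complex)"
  unfolding vector_space_def by (simp add: algebra_simps)

lemma vector_space_sV: "vector_space sV"
  unfolding vector_space_def sV_def by (simp add: fun_eq_iff algebra_simps)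

interpretation VS: vector_space sV
  by (rule vector_space_sV)

lemma (in vector_space_pair) finite_span_if_inj_into_finite_span:
  assumes f: "Vector_Spaces.linear s1 s2 f" and V: "vs1.subspace V" and inj: "inj_on f V"
    and into: "f ` V \<subseteq> vs2.span H" and H: "finite H"
  shows "\<exists>G. finite G \<and> G \<subseteq> V \<and> V \<subseteq> vs1.span G"
proof -
  obtain g where g_range: "range g \<subseteq> V" and g: "Vector_Spaces.linear s2 s1 g"
    and left_inverse: "\<forall>v\<in>V. g (f v) = v"
    using linear_exists_left_inverse_on[OF f V inj] by blast
  interpret inverse: vector_space_pair s2 s1
    by unfold_locales
  have "V \<subseteq> g ` vs2.span H"
    using left_inverse into by (metis image_eqI image_subset_iff subsetI)
  then have "V \<subseteq> vs1.span (g ` H)"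
    by (simp add: inverse.linear_span_image[OF g])
  then show ?thesis
    using H g_range by blast
qed

lemma (in vector_space) subspace_eq_if_dim_le:
  assumes S: "subspace S" and T: "subspace T" and "S \<subseteq> T"
    and T_span: "T \<subseteq> span V" and "finite V" and dim: "dim T \<le> dim S"
  shows "S = T"
proof (rule ccontr)
  assume "S \<noteq> T"
  then obtain x where "x \<in> T" "x \<notin> S"
    using \<open>S \<subseteq> T\<close> by blast
  obtain BS where BS: "BS \<subseteq> S" "independent BS" "S \<subseteq> span BS" "card BS = dim S"
    using basis_exists by blast
  obtain BT where BT: "BT \<subseteq> T" "independent BT" "T \<subseteq> span BT" "card BT = dim T"
    using basis_exists by blast
  have "finite BT"
    using independent_span_bound[OF \<open>finite V\<close> BT(2)] BT(1) T_span by blast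
  have "x \<notin> span BS"
    using \<open>x \<notin> S\<close> span_minimal[OF BS(1) S] by blast
  then have "independent (insert x BS)" and "x \<notin> BS"
    using independent_insertI[OF _ BS(2)] span_base by blast+
  moreover have "insert x BS \<subseteq> span BT"
    using \<open>x \<in> T\<close> BS(1) \<open>S \<subseteq> T\<close> BT(3) by blast
  ultimately have "finite (insert x BS) \<and> card (insert x BS) \<le> card BT"
    by (intro independent_span_bound[OF \<open>finite BT\<close>])
  then show False
    using \<open>x \<notin> BS\<close> BS(4) BT(4) dim by auto
qed

locale A_module =
  fixes sA :: "complex \<Rightarrow> 'a::ring \<Rightarrow> 'a" and sM :: "complex \<Rightarrow> 'm::ab_group_add \<Rightarrow> 'm"
    and act :: "'a \<Rightarrow> 'm \<Rightarrow> 'm"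
  assumes left_module: "left_module sA sM act"
begin

sublocale M: vector_space sM
  using left_module by (simp add: left_module_def)

sublocale FS: vector_space "sF sM :: complex \<Rightarrow> ('m \<Rightarrow> 'm) \<Rightarrow> 'm \<Rightarrow> 'm"
  by (rule vector_space_sF) (rule M.vector_space_axioms)

lemma sF_apply [simp]: "sF sM c T x = sM c (T x)"
  by (simp add: sF_def)

lemma act_add_left: "act (a + b) x = act a x + act b x"
  using left_module by (simp add: left_module_def)

lemma act_add_right: "act a (x + y) = act a x + act a y"
  using left_module by (simp add: left_module_def)

lemma act_scale_left: "act (sA c a) x = sM c (act a x)"
  using left_module by (simp add: left_module_def)

lemma act_scale_right: "act a (sM c x) = sM c (act a x)"
  using left_module by (simp add: left_module_def)

lemma act_mult: "act (a * b) x = act a (act b x)"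
  using left_module by (simp add: left_module_def)

lemma act_zero_left [simp]: "act 0 x = 0"
  using act_add_left[of 0 0 x] by simp

lemma act_zero_right [simp]: "act a 0 = 0"
  using act_add_right[of a 0 0] by simp

lemma act_sum_right: "act a (\<Sum>j\<in>J. f j) = (\<Sum>j\<in>J. act a (f j))"
  by (induction J rule: infinite_finite_induct) (auto simp: act_add_right)

abbreviation Bop :: "('m \<Rightarrow> 'm) set" (\<open>\<B>\<close>)
  where "\<B> \<equiv> Bset sM act"

lemma Bset_add_apply: "b \<in> \<B> \<Longrightarrow> b (x + y) = b x + b y"
  by (simp add: Bset_def)

lemma Bset_scale_apply: "b \<in> \<B> \<Longrightarrow> b (sM c x) = sM c (b x)"
  by (simp add: Bset_def)

lemma Bset_act_apply: "b \<in> \<B> \<Longrightarrow> b (act a x) = act a (b x)"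
  by (simp add: Bset_def)

lemma Bset_zero_apply: "b \<in> \<B> \<Longrightarrow> b 0 = 0"
  using Bset_add_apply[of b 0 0] by simp

lemma Bset_sum_apply: "b \<in> \<B> \<Longrightarrow> b (\<Sum>j\<in>J. f j) = (\<Sum>j\<in>J. b (f j))"
  by (induction J rule: infinite_finite_induct) (auto simp: Bset_zero_apply Bset_add_apply)

lemma Bset_id: "id \<in> \<B>"
  by (simp add: Bset_def)

lemma Bset_comp: "b \<in> \<B> \<Longrightarrow> c \<in> \<B> \<Longrightarrow> b \<circ> c \<in> \<B>"
  by (simp add: Bset_def)

lemma Bset_subspace: "FS.subspace \<B>"
  unfolding FS.subspace_def
  by (auto simp: Bset_def M.scale_right_distrib M.scale_scale mult.commute
      act_add_right act_scale_right)

lemma Bset_scale: "b \<in> \<B> \<Longrightarrow> sF sM c b \<in> \<B>"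
  using Bset_subspace FS.subspace_scale by blast

lemma Bset_add: "b \<in> \<B> \<Longrightarrow> b' \<in> \<B> \<Longrightarrow> b + b' \<in> \<B>"
  using Bset_subspace FS.subspace_add by blast

lemma span_map_into_span:
  fixes \<Psi> :: "('m \<Rightarrow> 'm) \<Rightarrow> 'm \<Rightarrow> 'm"
  assumes "T \<in> FS.span S"
    and add: "\<And>x y. \<Psi> (x + y) = \<Psi> x + \<Psi> y"
    and scale: "\<And>c x. \<Psi> (sF sM c x) = sF sM c (\<Psi> x)"
    and gen: "\<And>x. x \<in> S \<Longrightarrow> \<Psi> x \<in> FS.span S'"
  shows "\<Psi> T \<in> FS.span S'"
  using \<open>T \<in> FS.span S\<close>
proof (induction rule: FS.span_induct_alt)
  case base
  have "\<Psi> 0 = 0"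
    using add[of 0 0] by simp
  then show ?case
    by (metis FS.span_zero)
next
  case (step c x y)
  have "\<Psi> (sF sM c x + y) = sF sM c (\<Psi> x) + \<Psi> y"
    by (simp only: add scale)
  then show ?case
    using step gen FS.span_add FS.span_scale by metis
qed

lemma End0_vanishes: "T \<in> End0 sM act N \<Longrightarrow> x \<notin> N \<Longrightarrow> T x = 0"
  unfolding End0_def
proof (induction rule: FS.span_induct_alt)
  case (step c S T)
  then show ?case
    by (auto simp: rank1_on_def)
qed simp

lemma End0_additive:
  assumes "T \<in> End0 sM act N" and N: "M.subspace N" and "x \<in> N" "y \<in> N"
  shows "T (x + y) = T x + T y"
  using assms(1) \<open>x \<in> N\<close> \<open>y \<in> N\<close> unfolding End0_def
proof (induction rule: FS.span_induct_alt)
  case (step c S T)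
  then obtain \<phi> \<xi> where S: "S = rank1_on sM N \<phi> \<xi>" and \<phi>: "\<phi> \<in> dual_on sM act N"
    by blast
  have "S (x + y) = S x + S y"
    using \<phi> step.prems M.subspace_add[OF N]
    by (simp add: S rank1_on_def dual_on_def M.scale_left_distrib)
  then show ?case
    using step by (simp add: M.scale_right_distrib algebra_simps)
qed simp

lemma End0_zero: "T \<in> End0 sM act N \<Longrightarrow> M.subspace N \<Longrightarrow> T 0 = 0"
  using End0_additive[of T N 0 0] M.subspace_0[of N] by simp

lemma End0_sum:
  assumes T: "T \<in> End0 sM act N" and N: "M.subspace N" and v: "\<And>j. j \<in> J \<Longrightarrow> v j \<in> N"
  shows "T (\<Sum>j\<in>J. v j) = (\<Sum>j\<in>J. T (v j))"
  using v
proof (induction J rule: infinite_finite_induct)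
  case (insert j J)
  then have "sum v J \<in> N"
    using M.subspace_sum[OF N] by blast
  then show ?case
    using insert End0_additive[OF T N] by simp
qed (simp_all add: End0_zero[OF T N])

lemma End0_sandwich:
  assumes T: "T \<in> End0 sM act N" and u: "u \<in> \<B>" and v: "v \<in> \<B>"
    and uN: "u ` N \<subseteq> N'" and vN': "v ` N' \<subseteq> N"
  shows "(\<lambda>x. if x \<in> N' then u (T (v x)) else 0) \<in> End0 sM act N'"
  unfolding End0_def
proof (rule span_map_into_span[where \<Psi> = "\<lambda>T x. if x \<in> N' then u (T (v x)) else 0"])
  show "T \<in> FS.span {rank1_on sM N \<phi> \<xi> |\<phi> \<xi>. \<phi> \<in> dual_on sM act N \<and> \<xi> \<in> N}"
    using T by (simp add: End0_def)
  fix S assume "S \<in> {rank1_on sM N \<phi> \<xi> |\<phi> \<xi>. \<phi> \<in> dual_on sM act N \<and> \<xi> \<in> N}"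
  then obtain \<phi> \<xi> where S: "S = rank1_on sM N \<phi> \<xi>" and \<phi>: "\<phi> \<in> dual_on sM act N" and "\<xi> \<in> N"
    by blast
  have v_in: "v x \<in> N" if "x \<in> N'" for x
    using vN' that by blast
  obtain e where "e * e = e" and e: "\<forall>\<eta>\<in>N. \<phi> (act e \<eta>) = \<phi> \<eta>"
    using \<phi> by (auto simp: dual_on_def)
  then have "\<forall>\<eta>\<in>N'. (\<phi> \<circ> v) (act e \<eta>) = (\<phi> \<circ> v) \<eta>"
    using v_in by (simp add: Bset_act_apply[OF v])
  then have "\<phi> \<circ> v \<in> dual_on sM act N'"
    using \<phi> v_in \<open>e * e = e\<close>
    by (auto simp: dual_on_def Bset_add_apply[OF v] Bset_scale_apply[OF v])
  moreover have "(\<lambda>x. if x \<in> N' then u (S (v x)) else 0) = rank1_on sM N' (\<phi> \<circ> v) (u \<xi>)"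
    using v_in by (simp add: fun_eq_iff S rank1_on_def Bset_scale_apply[OF u])
  ultimately show "(\<lambda>x. if x \<in> N' then u (S (v x)) else 0)
      \<in> FS.span {rank1_on sM N' \<phi> \<xi> |\<phi> \<xi>. \<phi> \<in> dual_on sM act N' \<and> \<xi> \<in> N'}"
    using uN \<open>\<xi> \<in> N\<close> by (intro FS.span_base) blast
qed (auto simp: fun_eq_iff Bset_add_apply[OF u] Bset_scale_apply[OF u])

lemma finite_support_in_span:
  assumes "finite F" and outside: "\<And>x. x \<notin> F \<Longrightarrow> f x = 0" and in_span: "\<And>\<xi>. \<xi> \<in> F \<Longrightarrow> f \<xi> \<in> M.span V"
  shows "f \<in> FS.span ((\<lambda>(\<xi>, v) x. if x = \<xi> then v else 0) ` (F \<times> V))"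
    (is "_ \<in> FS.span ?H")
proof -
  define \<delta> where "\<delta> \<xi> v = (\<lambda>x. if x = \<xi> then v else 0)" for \<xi> v :: 'm
  have \<delta>_span: "\<delta> \<xi> v \<in> FS.span ?H" if "\<xi> \<in> F" "v \<in> M.span V" for \<xi> v
    using that(2)
  proof (induction rule: M.span_induct_alt)
    case base
    have "\<delta> \<xi> 0 = 0"
      by (simp add: \<delta>_def fun_eq_iff)
    then show ?case
      by (metis FS.span_zero)
  next
    case (step c w v)
    have "\<delta> \<xi> (sM c w + v) = sF sM c (\<delta> \<xi> w) + \<delta> \<xi> v"
      by (simp add: \<delta>_def fun_eq_iff)
    moreover have "\<delta> \<xi> w \<in> ?H"
      using step(1) \<open>\<xi> \<in> F\<close> by (auto simp: \<delta>_def)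
    ultimately show ?case
      using step(2) by (metis FS.span_add FS.span_scale FS.span_base)
  qed
  have "f = (\<Sum>\<xi>\<in>F. \<delta> \<xi> (f \<xi>))"
    using \<open>finite F\<close> outside by (auto simp: fun_eq_iff \<delta>_def sum_fun_apply)
  also have "\<dots> \<in> FS.span ?H"
    using \<delta>_span in_span by (intro FS.span_sum) auto
  finally show ?thesis .
qed

lemma A_submodule_generated: "A_submodule sM act (range (\<lambda>g. \<Sum>\<xi>\<in>F. act (g \<xi>) \<xi>))"
  (is "A_submodule sM act ?N")
  unfolding A_submodule_def M.subspace_def
proof (intro conjI ballI allI)
  show "0 \<in> ?N"
    by (rule range_eqI[of _ _ "\<lambda>_. 0"]) simp
  show "x + y \<in> ?N" if xy: "x \<in> ?N" "y \<in> ?N" for x y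
  proof -
    obtain g h where "x = (\<Sum>\<xi>\<in>F. act (g \<xi>) \<xi>)" "y = (\<Sum>\<xi>\<in>F. act (h \<xi>) \<xi>)"
      using xy by blast
    then have "x + y = (\<Sum>\<xi>\<in>F. act (g \<xi> + h \<xi>) \<xi>)"
      by (simp add: act_add_left sum.distrib)
    then show ?thesis
      by (rule range_eqI[where x = "\<lambda>\<xi>. g \<xi> + h \<xi>"])
  qed
  show "sM c x \<in> ?N" if x: "x \<in> ?N" for c x
  proof -
    obtain g where "x = (\<Sum>\<xi>\<in>F. act (g \<xi>) \<xi>)"
      using x by blast
    then have "sM c x = (\<Sum>\<xi>\<in>F. act (sA c (g \<xi>)) \<xi>)"
      by (simp add: act_scale_left M.scale_sum_right)
    then show ?thesis
      by (rule range_eqI[where x = "\<lambda>\<xi>. sA c (g \<xi>)"])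
  qed
  show "act a x \<in> ?N" if x: "x \<in> ?N" for a x
  proof -
    obtain g where "x = (\<Sum>\<xi>\<in>F. act (g \<xi>) \<xi>)"
      using x by blast
    then have "act a x = (\<Sum>\<xi>\<in>F. act (a * g \<xi>) \<xi>)"
      by (simp add: act_sum_right act_mult)
    then show ?thesis
      by (rule range_eqI[where x = "\<lambda>\<xi>. a * g \<xi>"])
  qed
qed

lemma Bset_eq_on_generators:
  assumes F: "surj (\<lambda>g. \<Sum>\<xi>\<in>F. act (g \<xi>) \<xi>)"
    and "T \<in> \<B>" "T' \<in> \<B>" and agree: "\<And>\<xi>. \<xi> \<in> F \<Longrightarrow> T \<xi> = T' \<xi>"
  shows "T = T'"
proof
  fix x
  obtain g where "x = (\<Sum>\<xi>\<in>F. act (g \<xi>) \<xi>)"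
    using F unfolding surj_def by blast
  then have "T x = (\<Sum>\<xi>\<in>F. act (g \<xi>) (T \<xi>))" and "T' x = (\<Sum>\<xi>\<in>F. act (g \<xi>) (T' \<xi>))"
    using assms(2,3) by (simp_all add: Bset_sum_apply Bset_act_apply)
  then show "T x = T' x"
    using agree by simp
qed

lemma Bset_finite_span_if_finite_values:
  assumes "finite F" and F: "surj (\<lambda>g. \<Sum>\<xi>\<in>F. act (g \<xi>) \<xi>)" and "finite V"
    and in_span: "\<And>T \<xi>. T \<in> \<B> \<Longrightarrow> \<xi> \<in> F \<Longrightarrow> T \<xi> \<in> M.span V"
  shows "\<exists>G. finite G \<and> G \<subseteq> \<B> \<and> \<B> \<subseteq> FS.span G"
proof -
  define \<Phi> where "\<Phi> T x = (if x \<in> F then T x else 0)" for T :: "'m \<Rightarrow> 'm" and x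
  interpret FS_pair: vector_space_pair "sF sM :: _ \<Rightarrow> ('m \<Rightarrow> 'm) \<Rightarrow> _" "sF sM :: _ \<Rightarrow> ('m \<Rightarrow> 'm) \<Rightarrow> _"
    by unfold_locales
  have linear: "Vector_Spaces.linear (sF sM) (sF sM) \<Phi>"
    by (auto simp: Vector_Spaces.linear_iff \<Phi>_def fun_eq_iff FS.vector_space_axioms)
  have inj: "inj_on \<Phi> \<B>"
  proof (rule inj_onI)
    fix T T' assume "T \<in> \<B>" "T' \<in> \<B>" and "\<Phi> T = \<Phi> T'"
    have "T \<xi> = T' \<xi>" if "\<xi> \<in> F" for \<xi>
      using fun_cong[OF \<open>\<Phi> T = \<Phi> T'\<close>, of \<xi>] that by (simp add: \<Phi>_def)
    then show "T = T'"
      using Bset_eq_on_generators[OF F \<open>T \<in> \<B>\<close> \<open>T' \<in> \<B>\<close>] by blast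
  qed
  have into: "\<Phi> ` \<B> \<subseteq> FS.span ((\<lambda>(\<xi>, v) x. if x = \<xi> then v else 0) ` (F \<times> V))"
    using in_span by (intro image_subsetI finite_support_in_span[OF \<open>finite F\<close>])
      (simp_all add: \<Phi>_def)
  show ?thesis
    by (rule FS_pair.finite_span_if_inj_into_finite_span[OF linear Bset_subspace inj into])
      (simp add: \<open>finite V\<close> \<open>finite F\<close>)
qed


lemma restrict_to_scale: "restrict_to N (sF sM c S) = sF sM c (restrict_to N S)"
  by (simp add: restrict_to_def fun_eq_iff)

end

lemma End0_C_commute: "S \<in> End0_C sM act N C \<Longrightarrow> \<xi> \<in> N \<Longrightarrow> c \<in> C \<Longrightarrow> S (c \<xi>) = c (S \<xi>)"
  by (simp add: End0_C_def)

section \<open>Restriction along a full idempotent\<close>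

text \<open>Read in \<open>B\<close>, whose product is reversed composition, \<open>decomposition\<close> says
  \<open>1 = (\<Sum>k\<in>K. bk k \<cdot> p \<cdot> ck k)\<close>, i.e. \<open>BpB = B\<close>.\<close>

locale full_idempotent = A_module sA sM act
  for sA :: "complex \<Rightarrow> 'a::ring \<Rightarrow> 'a" and sM :: "complex \<Rightarrow> 'm::ab_group_add \<Rightarrow> 'm"
    and act :: "'a \<Rightarrow> 'm \<Rightarrow> 'm" +
  fixes p :: "'m \<Rightarrow> 'm" and K :: "'k set" and bk ck :: "'k \<Rightarrow> 'm \<Rightarrow> 'm"
  assumes p_Bset: "p \<in> Bset sM act" and p_idem: "p \<circ> p = p"
    and finite_K: "finite K"
    and bk_Bset: "k \<in> K \<Longrightarrow> bk k \<in> Bset sM act"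
    and ck_Bset: "k \<in> K \<Longrightarrow> ck k \<in> Bset sM act"
    and decomposition: "(\<Sum>k\<in>K. ck k (p (bk k \<xi>))) = \<xi>"
begin

lemma p_idem_apply [simp]: "p (p x) = p x"
  using p_idem by (metis comp_apply)

lemma range_p_subspace: "M.subspace (range p)"
  unfolding M.subspace_def
proof (intro conjI ballI allI)
  show "0 \<in> range p"
    using Bset_zero_apply[OF p_Bset] by (metis rangeI)
  show "x + y \<in> range p" if xy: "x \<in> range p" "y \<in> range p" for x y
  proof -
    obtain u v where "x = p u" "y = p v"
      using xy by blast
    then show ?thesis
      using Bset_add_apply[OF p_Bset, of u v] by (metis rangeI)
  qed
  show "sM c x \<in> range p" if x: "x \<in> range p" for c x
  proof -
    obtain u where "x = p u"
      using x by blast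
    then show ?thesis
      using Bset_scale_apply[OF p_Bset, of c u] by (metis rangeI)
  qed
qed

lemma corner_comp_Bset: "b \<in> \<B> \<Longrightarrow> p \<circ> b \<circ> p \<in> \<B>"
  by (intro Bset_comp p_Bset)

lemma corner_in_pBp: "b \<in> \<B> \<Longrightarrow> p \<circ> b \<circ> p \<in> pBp sM act p"
  by (auto simp: pBp_def)

lemma End0_C_corner_commute:
  assumes T: "T \<in> End0_C sM act (range p) (pBp sM act p)" and "\<eta> \<in> range p" and b: "b \<in> \<B>"
  shows "T (p (b \<eta>)) = p (b (T \<eta>))"
proof -
  have "T (p \<eta>) = p (T \<eta>)"
    using End0_C_commute[OF T \<open>\<eta> \<in> range p\<close> corner_in_pBp[OF Bset_id]] by simp
  then have "p (T \<eta>) = T \<eta>"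
    using \<open>\<eta> \<in> range p\<close> by auto
  moreover have "T (p (b (p \<eta>))) = p (b (p (T \<eta>)))"
    using End0_C_commute[OF T \<open>\<eta> \<in> range p\<close> corner_in_pBp[OF b]] by simp
  ultimately show ?thesis
    using \<open>\<eta> \<in> range p\<close> by auto
qed

lemma End0_C_expansion:
  assumes S: "S \<in> End0_C sM act UNIV \<B>"
  shows "S \<xi> = (\<Sum>k\<in>K. ck k (S (p (bk k \<xi>))))"
proof -
  have S_End0: "S \<in> End0 sM act UNIV"
    using S by (simp add: End0_C_def)
  have "S \<xi> = S (\<Sum>k\<in>K. ck k (p (bk k \<xi>)))"
    by (simp add: decomposition)
  also have "\<dots> = (\<Sum>k\<in>K. S (ck k (p (bk k \<xi>))))"
    by (rule End0_sum[OF S_End0 M.subspace_UNIV]) simp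
  also have "\<dots> = (\<Sum>k\<in>K. ck k (S (p (bk k \<xi>))))"
    by (rule sum.cong) (simp_all add: End0_C_commute[OF S _ ck_Bset])
  finally show ?thesis .
qed

lemma restrict_End0_C:
  assumes S: "S \<in> End0_C sM act UNIV \<B>"
  shows "restrict_to (range p) S \<in> End0_C sM act (range p) (pBp sM act p)"
proof -
  have "restrict_to (range p) S = (\<lambda>x. if x \<in> range p then p (S (id x)) else 0)"
    using End0_C_commute[OF S UNIV_I p_Bset] by (auto simp: restrict_to_def fun_eq_iff)
  also have "\<dots> \<in> End0 sM act (range p)"
    using S by (intro End0_sandwich[OF _ p_Bset Bset_id]) (auto simp: End0_C_def)
  finally have "restrict_to (range p) S \<in> End0 sM act (range p)" .
  moreover have "restrict_to (range p) S (q \<xi>) = q (restrict_to (range p) S \<xi>)"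
    if "\<xi> \<in> range p" and "q \<in> pBp sM act p" for \<xi> q
  proof -
    obtain b where "b \<in> \<B>" and q: "q = p \<circ> b \<circ> p"
      using \<open>q \<in> pBp sM act p\<close> by (auto simp: pBp_def)
    then show ?thesis
      using that End0_C_commute[OF S UNIV_I corner_comp_Bset] by (auto simp: restrict_to_def)
  qed
  ultimately show ?thesis
    by (simp add: End0_C_def)
qed

lemma restrict_inj_on: "inj_on (restrict_to (range p)) (End0_C sM act UNIV \<B>)"
proof (rule inj_onI)
  fix S1 S2
  assume S1: "S1 \<in> End0_C sM act UNIV \<B>" and S2: "S2 \<in> End0_C sM act UNIV \<B>"
    and eq: "restrict_to (range p) S1 = restrict_to (range p) S2"
  have agree: "S1 (p x) = S2 (p x)" for x
    using fun_cong[OF eq, of "p x"] by (simp add: restrict_to_def)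
  show "S1 = S2"
  proof
    fix \<xi>
    have "S1 \<xi> = (\<Sum>k\<in>K. ck k (S1 (p (bk k \<xi>))))"
      by (rule End0_C_expansion[OF S1])
    also have "\<dots> = (\<Sum>k\<in>K. ck k (S2 (p (bk k \<xi>))))"
      by (simp only: agree)
    also have "\<dots> = S2 \<xi>"
      by (rule End0_C_expansion[OF S2, symmetric])
    finally show "S1 \<xi> = S2 \<xi>" .
  qed
qed

definition extend :: "('m \<Rightarrow> 'm) \<Rightarrow> 'm \<Rightarrow> 'm"
  where "extend T \<xi> = (\<Sum>k\<in>K. ck k (T (p (bk k \<xi>))))"

lemma extend_End0:
  assumes T: "T \<in> End0 sM act (range p)"
  shows "extend T \<in> End0 sM act UNIV"
proof -
  have "extend T = (\<Sum>k\<in>K. (\<lambda>x. if x \<in> UNIV then ck k (T ((p \<circ> bk k) x)) else 0))"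
    by (simp add: fun_eq_iff extend_def sum_fun_apply)
  also have "\<dots> \<in> End0 sM act UNIV"
    unfolding End0_def
    by (intro FS.span_sum End0_sandwich[OF T, unfolded End0_def] ck_Bset Bset_comp p_Bset bk_Bset)
      auto
  finally show ?thesis .
qed

lemma extend_commute:
  assumes T: "T \<in> End0_C sM act (range p) (pBp sM act p)" and d: "d \<in> \<B>"
  shows "extend T (d \<xi>) = d (extend T \<xi>)"
proof -
  define \<eta> where "\<eta> j = p (bk j \<xi>)" for j
  have T_End0: "T \<in> End0 sM act (range p)"
    using T by (simp add: End0_C_def)
  \<comment> \<open>Expand \<open>d \<xi>\<close> by the decomposition; \<open>T\<close> then commutes with each corner
    \<open>p \<circ> (bk k \<circ> d \<circ> ck j) \<circ> p\<close>.\<close>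
  have inner: "T (p (bk k (d \<xi>))) = (\<Sum>j\<in>K. p (bk k (d (ck j (T (\<eta> j))))))" if "k \<in> K" for k
  proof -
    have "d \<xi> = (\<Sum>j\<in>K. d (ck j (\<eta> j)))"
      by (simp add: \<eta>_def decomposition flip: Bset_sum_apply[OF d])
    then have "T (p (bk k (d \<xi>))) = T (\<Sum>j\<in>K. p ((bk k \<circ> d \<circ> ck j) (\<eta> j)))"
      using that by (simp add: Bset_sum_apply bk_Bset p_Bset)
    also have "\<dots> = (\<Sum>j\<in>K. T (p ((bk k \<circ> d \<circ> ck j) (\<eta> j))))"
      by (rule End0_sum[OF T_End0 range_p_subspace]) simp
    also have "\<dots> = (\<Sum>j\<in>K. p ((bk k \<circ> d \<circ> ck j) (T (\<eta> j))))"
      using that by (intro sum.cong refl End0_C_corner_commute[OF T] Bset_comp bk_Bset ck_Bset d)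
        (auto simp: \<eta>_def)
    finally show ?thesis
      by simp
  qed
  have "extend T (d \<xi>) = (\<Sum>k\<in>K. \<Sum>j\<in>K. ck k (p (bk k (d (ck j (T (\<eta> j)))))))"
    by (simp add: extend_def inner ck_Bset Bset_sum_apply cong: sum.cong)
  also have "\<dots> = (\<Sum>j\<in>K. \<Sum>k\<in>K. ck k (p (bk k (d (ck j (T (\<eta> j)))))))"
    by (rule sum.swap)
  also have "\<dots> = d (extend T \<xi>)"
    by (simp add: decomposition extend_def \<eta>_def Bset_sum_apply d)
  finally show ?thesis .
qed

lemma extend_End0_C:
  "T \<in> End0_C sM act (range p) (pBp sM act p) \<Longrightarrow> extend T \<in> End0_C sM act UNIV \<B>"
  by (simp add: End0_C_def extend_End0 extend_commute)

lemma restrict_extend: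
  assumes T: "T \<in> End0_C sM act (range p) (pBp sM act p)"
  shows "restrict_to (range p) (extend T) = T"
proof
  fix x
  show "restrict_to (range p) (extend T) x = T x"
  proof (cases "x \<in> range p")
    case True
    then have "extend T x = (\<Sum>k\<in>K. ck k (p (bk k (T x))))"
      by (auto simp: extend_def End0_C_corner_commute[OF T] bk_Bset intro: sum.cong)
    then show ?thesis
      using True by (simp add: restrict_to_def decomposition)
  next
    case False
    then show ?thesis
      using T End0_vanishes[of T "range p" x] by (simp add: restrict_to_def End0_C_def)
  qed
qed

lemma restrict_bij_betw:
  "bij_betw (restrict_to (range p)) (End0_C sM act UNIV \<B>) (End0_C sM act (range p) (pBp sM act p))"
  unfolding bij_betw_def
proof
  show "restrict_to (range p) ` End0_C sM act UNIV \<B> = End0_C sM act (range p) (pBp sM act p)"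
    using restrict_End0_C restrict_extend extend_End0_C by (force intro: rev_image_eqI)
qed (rule restrict_inj_on)

end

section \<open>Finite-dimensionality of \<open>B\<close>\<close>

locale orthogonal_idempotents =
  fixes sA :: "complex \<Rightarrow> 'a::ring \<Rightarrow> 'a" and E :: "'a set"
  assumes algebra: "cx_algebra sA"
    and idempotent: "e \<in> E \<Longrightarrow> e * e = e"
    and orthogonal: "e \<in> E \<Longrightarrow> f \<in> E \<Longrightarrow> e \<noteq> f \<Longrightarrow> e * f = 0"
begin

sublocale A: vector_space sA
  using algebra by (simp add: cx_algebra_def)

lemma scale_mult_left: "sA c a * b = sA c (a * b)"
  using algebra unfolding cx_algebra_def by metis

lemma scale_mult_right: "a * sA c b = sA c (a * b)"
  using algebra unfolding cx_algebra_def by metis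

definition corners :: "'a set \<Rightarrow> 'a set"
  where "corners F = (\<Union>e\<in>F. \<Union>f\<in>F. {e * a * f | a. True})"

lemma corners_mono: "F \<subseteq> F' \<Longrightarrow> corners F \<subseteq> corners F'"
  by (auto simp: corners_def)

lemma sum_mult_idempotent:
  assumes "E0 \<subseteq> E" "finite E0" "i \<in> E"
  shows "(\<Sum>E0) * i = (if i \<in> E0 then i else 0)"
proof -
  have "(\<Sum>E0) * i = (\<Sum>e\<in>E0. if e = i then i else 0)"
    unfolding sum_distrib_right
  proof (rule sum.cong)
    fix e assume "e \<in> E0"
    then show "e * i = (if e = i then i else 0)"
      using assms by (cases "e = i") (auto simp: idempotent orthogonal)
  qed simp
  then show ?thesis
    using assms(2) by (simp add: sum.delta')
qed

lemma idempotent_mult_sum: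
  assumes "E0 \<subseteq> E" "finite E0" "i \<in> E"
  shows "i * (\<Sum>E0) = (if i \<in> E0 then i else 0)"
proof -
  have "i * (\<Sum>E0) = (\<Sum>e\<in>E0. if e = i then i else 0)"
    unfolding sum_distrib_left
  proof (rule sum.cong)
    fix e assume "e \<in> E0"
    then show "i * e = (if e = i then i else 0)"
      using assms by (cases "e = i") (auto simp: idempotent orthogonal)
  qed simp
  then show ?thesis
    using assms(2) by (simp add: sum.delta')
qed

lemma sum_mult_span_corners:
  assumes "E0 \<subseteq> E" "finite E0" "y \<in> A.span (corners E0)"
  shows "(\<Sum>E0) * y = y"
  using assms(3)
proof (induction rule: A.span_induct_alt)
  case (step c g y)
  then obtain e f a where "e \<in> E0" "g = e * a * f"
    by (auto simp: corners_def)
  then have "(\<Sum>E0) * g = g"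
    using sum_mult_idempotent[OF assms(1,2), of e] assms(1) by (auto simp: mult.assoc[symmetric])
  then show ?case
    using step by (simp add: distrib_left scale_mult_right)
qed simp

lemma sum_compress_span_corners:
  assumes "E0 \<subseteq> E" "finite E0" "x \<in> A.span (corners E)"
  shows "(\<Sum>E0) * x * (\<Sum>E0) \<in> A.span (corners E0)"
  using assms(3)
proof (induction rule: A.span_induct_alt)
  case base
  then show ?case
    by (simp add: A.span_zero)
next
  case (step c g y)
  obtain e f a where ef: "e \<in> E" "f \<in> E" "g = e * a * f"
    using step(1) by (auto simp: corners_def)
  have "(\<Sum>E0) * g * (\<Sum>E0) = ((\<Sum>E0) * e) * a * (f * (\<Sum>E0))"
    by (simp add: ef mult.assoc)
  also have "\<dots> \<in> A.span (corners E0)"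
    using sum_mult_idempotent[OF assms(1,2) ef(1)] idempotent_mult_sum[OF assms(1,2) ef(2)]
    by (auto simp: corners_def intro: A.span_base A.span_zero)
  finally show ?case
    using step(2)
    by (simp add: distrib_left distrib_right scale_mult_left scale_mult_right
        A.span_add A.span_scale)
qed

lemma span_corners_finite_support:
  assumes "x \<in> A.span (corners E)"
  shows "\<exists>E0\<subseteq>E. finite E0 \<and> x \<in> A.span (corners E0)"
  using assms
proof (induction rule: A.span_induct_alt)
  case base
  then show ?case
    by (auto intro: A.span_zero)
next
  case (step c g y)
  obtain e f a where ef: "e \<in> E" "f \<in> E" "g = e * a * f"
    using step(1) by (auto simp: corners_def)
  obtain E0 where E0: "E0 \<subseteq> E" "finite E0" "y \<in> A.span (corners E0)"
    using step(2) by blast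
  define E1 where "E1 = insert e (insert f E0)"
  have "g \<in> A.span (corners E1)"
    using ef by (auto simp: corners_def E1_def intro!: A.span_base)
  moreover have "y \<in> A.span (corners E1)"
    using E0(3) A.span_mono[OF corners_mono, of E0 E1] by (auto simp: E1_def)
  ultimately have "sA c g + y \<in> A.span (corners E1)"
    by (simp add: A.span_add A.span_scale)
  then show ?case
    using E0 ef by (intro exI[of _ E1]) (auto simp: E1_def)
qed

lemma span_corners_finite_support_set:
  assumes "finite X" and "X \<subseteq> A.span (corners E)"
  shows "\<exists>E0\<subseteq>E. finite E0 \<and> X \<subseteq> A.span (corners E0)"
  using assms
proof (induction X rule: finite_induct)
  case (insert x X)
  then obtain E0 E1 where "E0 \<subseteq> E" "finite E0" "X \<subseteq> A.span (corners E0)"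
    and "E1 \<subseteq> E" "finite E1" "x \<in> A.span (corners E1)"
    using span_corners_finite_support by (metis insert_subset)
  moreover have "A.span (corners E0) \<union> A.span (corners E1) \<subseteq> A.span (corners (E0 \<union> E1))"
    by (intro Un_least A.span_mono corners_mono) auto
  ultimately show ?case
    by (intro exI[of _ "E0 \<union> E1"]) auto
qed (auto intro!: exI[of _ "{}"])

lemma span_corners_finite_dim:
  assumes "finite E0" and fin: "\<forall>e\<in>E0. \<forall>f\<in>E0. fin_dim_sub sA {e * a * f | a. True}"
  shows "\<exists>G. finite G \<and> A.span (corners E0) \<subseteq> A.span G"
proof -
  have "\<forall>ef\<in>E0 \<times> E0. \<exists>G. finite G \<and> A.span G = {fst ef * a * snd ef | a. True}"
    using fin by (auto simp: fin_dim_sub_def)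
  then obtain G
    where G: "\<forall>ef\<in>E0 \<times> E0. finite (G ef) \<and> A.span (G ef) = {fst ef * a * snd ef | a. True}"
    by metis
  have "corners E0 \<subseteq> A.span (\<Union>ef\<in>E0 \<times> E0. G ef)"
  proof
    fix y assume "y \<in> corners E0"
    then obtain e f a where "e \<in> E0" "f \<in> E0" "y = e * a * f"
      by (auto simp: corners_def)
    then have "y \<in> A.span (G (e, f))" and "G (e, f) \<subseteq> (\<Union>ef\<in>E0 \<times> E0. G ef)"
      using G by auto
    then show "y \<in> A.span (\<Union>ef\<in>E0 \<times> E0. G ef)"
      using A.span_mono by blast
  qed
  then show ?thesis
    using G \<open>finite E0\<close> by (intro exI[of _ "\<Union>ef\<in>E0 \<times> E0. G ef"]) (simp add: A.span_minimal)
qed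

end

lemma AUF_local_unit:
  assumes algebra: "cx_algebra sA" and "AUF sA" and "finite X"
  obtains e G where "\<forall>x\<in>X. e * x = x" and "finite G" and "\<forall>a. e * a * e \<in> module.span sA G"
proof -
  obtain E where idem: "\<forall>e\<in>E. e * e = e" and orth: "\<forall>e\<in>E. \<forall>f\<in>E. e \<noteq> f \<longrightarrow> e * f = 0"
    and fin: "\<forall>e\<in>E. \<forall>f\<in>E. fin_dim_sub sA {e * a * f | a. True}"
    and span: "module.span sA (\<Union>e\<in>E. \<Union>f\<in>E. {e * a * f | a. True}) = UNIV"
    using \<open>AUF sA\<close> unfolding AUF_def by blast
  interpret orthogonal_idempotents sA E
    using algebra idem orth by unfold_locales auto
  have span_corners: "A.span (corners E) = UNIV"
    using span by (simp add: corners_def)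
  obtain E0 where E0: "E0 \<subseteq> E" "finite E0" and X: "X \<subseteq> A.span (corners E0)"
    using span_corners_finite_support_set[OF \<open>finite X\<close>] span_corners by blast
  obtain G where "finite G" and G: "A.span (corners E0) \<subseteq> A.span G"
    using span_corners_finite_dim[OF E0(2)] fin E0(1) by blast
  have "\<forall>x\<in>X. (\<Sum>E0) * x = x"
    using sum_mult_span_corners[OF E0] X by blast
  moreover have "\<forall>a. (\<Sum>E0) * a * (\<Sum>E0) \<in> A.span G"
    using sum_compress_span_corners[OF E0] span_corners G by blast
  ultimately show ?thesis
    using that \<open>finite G\<close> by blast
qed

locale AUF_coherent_module = A_module sA sM act
  for sA :: "complex \<Rightarrow> 'a::ring \<Rightarrow> 'a" and sM :: "complex \<Rightarrow> 'm::ab_group_add \<Rightarrow> 'm"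
    and act :: "'a \<Rightarrow> 'm \<Rightarrow> 'm" +
  assumes algebra: "cx_algebra sA" and AUF: "AUF sA" and coherent: "coherent sM act"
begin

sublocale A: vector_space sA
  using algebra by (simp add: cx_algebra_def)

lemma quasicoherent: "\<exists>a. act a \<xi> = \<xi>"
  using coherent by (auto simp: coherent_def quasicoherent_on_def)

lemma finite_generators:
  obtains F where "finite F" and "surj (\<lambda>g. \<Sum>\<xi>\<in>F. act (g \<xi>) \<xi>)"
proof -
  obtain F where "finite F" and generates: "\<And>N. A_submodule sM act N \<Longrightarrow> F \<subseteq> N \<Longrightarrow> N = UNIV"
    using coherent by (auto simp: coherent_def)
  have "\<xi>0 \<in> range (\<lambda>g. \<Sum>\<xi>\<in>F. act (g \<xi>) \<xi>)" if "\<xi>0 \<in> F" for \<xi>0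
  proof -
    obtain a0 where "act a0 \<xi>0 = \<xi>0"
      using quasicoherent by blast
    then have "\<xi>0 = (\<Sum>\<xi>\<in>F. act (if \<xi> = \<xi>0 then a0 else 0) \<xi>)"
      using that \<open>finite F\<close> by (simp add: if_distrib[of "\<lambda>a. act a _"] cong: if_cong)
    then show ?thesis
      by (rule range_eqI[where x = "\<lambda>\<xi>. if \<xi> = \<xi>0 then a0 else 0"])
  qed
  then show ?thesis
    using that \<open>finite F\<close> generates[OF A_submodule_generated] by blast
qed

lemma act_span_left: "b \<in> A.span S \<Longrightarrow> act b \<xi> \<in> M.span ((\<lambda>b. act b \<xi>) ` S)"
proof (induction rule: A.span_induct_alt)
  case (step c b' b)
  then show ?case
    by (simp add: act_add_left act_scale_left M.span_add M.span_scale M.span_base)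
qed (simp add: M.span_zero)

lemma Bset_finite_span: "\<exists>G. finite G \<and> G \<subseteq> \<B> \<and> \<B> \<subseteq> FS.span G"
proof -
  obtain F where "finite F" and F: "surj (\<lambda>g. \<Sum>\<xi>\<in>F. act (g \<xi>) \<xi>)"
    by (rule finite_generators)
  obtain a where a: "\<And>\<xi>. act (a \<xi>) \<xi> = \<xi>"
    using quasicoherent by metis
  obtain e GA where e: "\<forall>x\<in>a ` F. e * x = x" and "finite GA" and GA: "\<forall>b. e * b * e \<in> A.span GA"
    using AUF_local_unit[OF algebra AUF] \<open>finite F\<close> by blast
  have e_F: "act e \<xi> = \<xi>" if "\<xi> \<in> F" for \<xi>
    using a[of \<xi>] e that by (metis act_mult imageI)
  define GM where "GM = (\<lambda>(b, \<xi>). act b \<xi>) ` (GA \<times> F)"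
  have act_e: "act e x \<in> M.span GM" for x
  proof -
    obtain g where x: "x = (\<Sum>\<xi>\<in>F. act (g \<xi>) \<xi>)"
      using F unfolding surj_def by blast
    have "act e x = (\<Sum>\<xi>\<in>F. act (e * g \<xi> * e) \<xi>)"
      using e_F by (simp add: x act_sum_right act_mult)
    moreover have "act (e * g \<xi> * e) \<xi> \<in> M.span GM" if "\<xi> \<in> F" for \<xi>
    proof -
      have "(\<lambda>b. act b \<xi>) ` GA \<subseteq> GM"
        using that by (auto simp: GM_def)
      then show ?thesis
        using act_span_left[OF GA[rule_format]] M.span_mono by blast
    qed
    ultimately show ?thesis
      by (simp add: M.span_sum)
  qed
  have "T \<xi> \<in> M.span GM" if "T \<in> \<B>" "\<xi> \<in> F" for T \<xi>
    using act_e[of "T \<xi>"] e_F[OF \<open>\<xi> \<in> F\<close>] Bset_act_apply[OF \<open>T \<in> \<B>\<close>, of e \<xi>] by simp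
  moreover have "finite GM"
    using \<open>finite GA\<close> \<open>finite F\<close> by (simp add: GM_def)
  ultimately show ?thesis
    using Bset_finite_span_if_finite_values[OF \<open>finite F\<close> F] by blast
qed

end

section \<open>Generating idempotents are full\<close>

locale generating_idempotent = AUF_coherent_module sA sM act
  for sA :: "complex \<Rightarrow> 'a::ring \<Rightarrow> 'a" and sM :: "complex \<Rightarrow> 'm::ab_group_add \<Rightarrow> 'm"
    and act :: "'a \<Rightarrow> 'm \<Rightarrow> 'm" +
  fixes p :: "'m \<Rightarrow> 'm"
  assumes p_Bset: "p \<in> Bset sM act" and p_idem: "p \<circ> p = p"
    and generating: "generating sM act p"
begin

text \<open>In \<open>B\<close>, the map \<open>c \<circ> p \<circ> b\<close> is the product \<open>b \<cdot> p \<cdot> c\<close>.\<close>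

definition BpB :: "('m \<Rightarrow> 'm) set"
  where "BpB = FS.span {c \<circ> p \<circ> b | b c. b \<in> \<B> \<and> c \<in> \<B>}"

lemma comp_mem_BpB:
  assumes b: "b \<in> \<B>" and "z \<in> BpB"
  shows "b \<circ> z \<in> BpB"
  using \<open>z \<in> BpB\<close> unfolding BpB_def
proof (rule span_map_into_span)
  show "b \<circ> (u + v) = (b \<circ> u) + (b \<circ> v)" for u v
    by (simp add: fun_eq_iff Bset_add_apply[OF b])
  show "b \<circ> sF sM c u = sF sM c (b \<circ> u)" for c u
    by (simp add: fun_eq_iff Bset_scale_apply[OF b])
  fix y assume "y \<in> {c \<circ> p \<circ> b | b c. b \<in> \<B> \<and> c \<in> \<B>}"
  then obtain b' c where "y = c \<circ> p \<circ> b'" "b' \<in> \<B>" "c \<in> \<B>"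
    by blast
  then have "b \<circ> y = (b \<circ> c) \<circ> p \<circ> b'" and "b \<circ> c \<in> \<B>"
    using Bset_comp[OF b] by (auto simp: comp_assoc)
  then show "b \<circ> y \<in> FS.span {c \<circ> p \<circ> b | b c. b \<in> \<B> \<and> c \<in> \<B>}"
    using \<open>b' \<in> \<B>\<close> by (intro FS.span_base) blast
qed

lemma p_comp_mem_BpB: "b \<in> \<B> \<Longrightarrow> p \<circ> b \<in> BpB"
  unfolding BpB_def
  by (intro FS.span_base CollectI exI[of _ b] exI[of _ id]) (simp add: Bset_id)

lemma BpB_decomposition:
  assumes "T \<in> BpB"
  obtains K :: "('m \<Rightarrow> 'm) set" and bk ck where "finite K"
    and "\<And>k. k \<in> K \<Longrightarrow> bk k \<in> \<B>" and "\<And>k. k \<in> K \<Longrightarrow> ck k \<in> \<B>"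
    and "\<And>\<xi>. T \<xi> = (\<Sum>k\<in>K. ck k (p (bk k \<xi>)))"
proof -
  obtain K r where "finite K" and K: "K \<subseteq> {c \<circ> p \<circ> b | b c. b \<in> \<B> \<and> c \<in> \<B>}"
    and T: "T = (\<Sum>k\<in>K. sF sM (r k) k)"
    using \<open>T \<in> BpB\<close> unfolding BpB_def FS.span_explicit by blast
  have "\<forall>k\<in>K. \<exists>bc. fst bc \<in> \<B> \<and> snd bc \<in> \<B> \<and> k = snd bc \<circ> p \<circ> fst bc"
    using K by fastforce
  then obtain f where f: "\<And>k. k \<in> K \<Longrightarrow> fst (f k) \<in> \<B> \<and> snd (f k) \<in> \<B> \<and> k = snd (f k) \<circ> p \<circ> fst (f k)"
    by metis
  have "T \<xi> = (\<Sum>k\<in>K. sF sM (r k) (snd (f k)) (p (fst (f k) \<xi>)))" for \<xi>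
    unfolding T sum_fun_apply
  proof (rule sum.cong[OF refl])
    fix k assume "k \<in> K"
    then have "k = snd (f k) \<circ> p \<circ> fst (f k)"
      using f by blast
    then show "sF sM (r k) k \<xi> = sF sM (r k) (snd (f k)) (p (fst (f k) \<xi>))"
      by (metis comp_apply sF_apply)
  qed
  then show ?thesis
    using f Bset_scale by (intro that[of K "\<lambda>k. fst (f k)" "\<lambda>k. sF sM (r k) (snd (f k))"])
      (simp_all add: \<open>finite K\<close>)
qed

lemma quotient_of_Bp_annihilated:
  fixes s :: "complex \<Rightarrow> 'v::ab_group_add \<Rightarrow> 'v"
  assumes module: "B_lmodule \<B> sM s V \<beta>" and quotient: "quotient_of_Bp \<B> sM p s V \<beta>"
    and annihilated: "\<And>v. v \<in> V \<Longrightarrow> \<beta> p v = 0"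
  shows "V \<subseteq> {0}"
proof
  fix v assume "v \<in> V"
  obtain f where f_act: "\<forall>b'\<in>\<B>. \<forall>x\<in>{p \<circ> b | b. b \<in> \<B>}. f (x \<circ> b') = \<beta> b' (f x)"
    and f_onto: "f ` {p \<circ> b | b. b \<in> \<B>} = V"
    using quotient unfolding quotient_of_Bp_def by blast
  obtain b where "b \<in> \<B>" and v: "v = f (p \<circ> b)"
    using f_onto \<open>v \<in> V\<close> by blast
  have p_gen: "p \<in> {p \<circ> b | b. b \<in> \<B>}"
    by (intro CollectI exI[of _ id]) (simp add: Bset_id)
  then have "f p \<in> V"
    using f_onto by blast
  have zero: "\<beta> b 0 = 0"
  proof -
    interpret S: vector_space s
      using module by (simp add: B_lmodule_def)
    have "0 \<in> V"
      using module S.subspace_0 by (simp add: B_lmodule_def)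
    then have "\<beta> b (0 + 0) = \<beta> b 0 + \<beta> b 0"
      using module \<open>b \<in> \<B>\<close> unfolding B_lmodule_def by blast
    then show ?thesis
      by simp
  qed
  have "v = f (p \<circ> (p \<circ> b))"
    using p_idem by (simp add: v flip: comp_assoc)
  also have "\<dots> = \<beta> (p \<circ> b) (f p)"
    using f_act Bset_comp[OF p_Bset \<open>b \<in> \<B>\<close>] p_gen by blast
  also have "\<dots> = \<beta> b (\<beta> p (f p))"
    using module \<open>b \<in> \<B>\<close> p_Bset \<open>f p \<in> V\<close> unfolding B_lmodule_def by blast
  also have "\<dots> = 0"
    using annihilated[OF \<open>f p \<in> V\<close>] zero by simp
  finally show "v \<in> {0}"
    by simp
qed

end

locale spanning_list = generating_idempotent sA sM act p
  for sA :: "complex \<Rightarrow> 'a::ring \<Rightarrow> 'a" and sM :: "complex \<Rightarrow> 'm::ab_group_add \<Rightarrow> 'm"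
    and act :: "'a \<Rightarrow> 'm \<Rightarrow> 'm" and p :: "'m \<Rightarrow> 'm" +
  fixes xs :: "('m \<Rightarrow> 'm) list"
  assumes xs_Bset: "set xs \<subseteq> Bset sM act" and Bset_span_xs: "Bset sM act \<subseteq> FS.span (set xs)"
begin

sublocale FC: vector_space_pair "sF sM :: complex \<Rightarrow> ('m \<Rightarrow> 'm) \<Rightarrow> _"
    "(*) :: complex \<Rightarrow> complex \<Rightarrow> complex"
  by (intro vector_space_pair.intro FS.vector_space_axioms vector_space_complex_mult)

text \<open>\<open>W\<close> is the dual of \<open>B/BpB\<close>, on which \<open>B\<close> acts by precomposition. Generating
  idempotents are only tested on modules inside \<open>nat \<Rightarrow> complex\<close>, so \<open>W\<close> is represented by
  its values along the spanning list \<open>xs\<close>.\<close>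

definition W :: "(('m \<Rightarrow> 'm) \<Rightarrow> complex) set"
  where "W = {\<phi>. Vector_Spaces.linear (sF sM) (*) \<phi> \<and> (\<forall>x\<in>BpB. \<phi> x = 0)}"

definition coords :: "(('m \<Rightarrow> 'm) \<Rightarrow> complex) \<Rightarrow> nat \<Rightarrow> complex"
  where "coords \<phi> k = (if k < length xs then \<phi> (xs ! k) else 0)"

definition dual_act :: "('m \<Rightarrow> 'm) \<Rightarrow> (('m \<Rightarrow> 'm) \<Rightarrow> complex) \<Rightarrow> ('m \<Rightarrow> 'm) \<Rightarrow> complex"
  where "dual_act b \<phi> x = \<phi> (b \<circ> x)"

definition coord_act :: "('m \<Rightarrow> 'm) \<Rightarrow> (nat \<Rightarrow> complex) \<Rightarrow> nat \<Rightarrow> complex"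
  where "coord_act b w = coords (dual_act b (SOME \<phi>. \<phi> \<in> W \<and> coords \<phi> = w))"

lemma W_iff: "\<phi> \<in> W \<longleftrightarrow> (\<forall>x y. \<phi> (x + y) = \<phi> x + \<phi> y) \<and> (\<forall>c x. \<phi> (sF sM c x) = c * \<phi> x)
    \<and> (\<forall>x\<in>BpB. \<phi> x = 0)"
  by (simp add: W_def Vector_Spaces.linear_iff FS.vector_space_axioms vector_space_complex_mult)

lemma W_add: "\<phi> \<in> W \<Longrightarrow> \<psi> \<in> W \<Longrightarrow> \<phi> + \<psi> \<in> W"
  by (simp add: W_iff distrib_left)

lemma W_scale: "\<phi> \<in> W \<Longrightarrow> (\<lambda>x. c * \<phi> x) \<in> W"
  unfolding W_iff by (simp add: distrib_left mult.left_commute)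

lemma W_zero: "(\<lambda>x. 0) \<in> W"
  by (simp add: W_iff)

lemma dual_act_W:
  assumes b: "b \<in> \<B>" and "\<phi> \<in> W"
  shows "dual_act b \<phi> \<in> W"
proof -
  have "b \<circ> (x + y) = (b \<circ> x) + (b \<circ> y)" "b \<circ> sF sM c x = sF sM c (b \<circ> x)"
    for x y :: "'m \<Rightarrow> 'm" and c
    by (simp_all add: fun_eq_iff Bset_add_apply[OF b] Bset_scale_apply[OF b])
  then show ?thesis
    using \<open>\<phi> \<in> W\<close> comp_mem_BpB[OF b] by (simp add: W_iff dual_act_def)
qed


lemma dual_act_add_left: "\<phi> \<in> W \<Longrightarrow> dual_act (b + b') \<phi> = dual_act b \<phi> + dual_act b' \<phi>"
  by (simp add: dual_act_def fun_eq_iff W_iff plus_fun_def comp_def)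

lemma dual_act_scale_left:
  assumes "\<phi> \<in> W"
  shows "dual_act (sF sM c b) \<phi> = (\<lambda>x. c * dual_act b \<phi> x)"
proof -
  have "\<phi> (sF sM c b \<circ> x) = c * \<phi> (b \<circ> x)" for x
  proof -
    have "sF sM c b \<circ> x = sF sM c (b \<circ> x)"
      by (simp add: fun_eq_iff)
    then show ?thesis
      using assms by (simp add: W_iff)
  qed
  then show ?thesis
    by (simp add: dual_act_def fun_eq_iff)
qed

lemma dual_act_comp: "dual_act (b' \<circ> b) \<phi> = dual_act b (dual_act b' \<phi>)"
  by (simp add: dual_act_def fun_eq_iff comp_assoc)

lemma dual_act_add_right: "dual_act b (\<phi> + \<psi>) = dual_act b \<phi> + dual_act b \<psi>"
  by (simp add: dual_act_def fun_eq_iff)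

lemma dual_act_scale_right: "dual_act b (\<lambda>x. c * \<phi> x) = (\<lambda>x. c * dual_act b \<phi> x)"
  by (simp add: dual_act_def fun_eq_iff)

lemma dual_act_id: "dual_act id \<phi> = \<phi>"
  by (simp add: dual_act_def fun_eq_iff)

lemma W_eq_on_Bset:
  assumes "\<phi> \<in> W" "\<psi> \<in> W" "coords \<phi> = coords \<psi>" "x \<in> \<B>"
  shows "\<phi> x = \<psi> x"
proof -
  have linear: "Vector_Spaces.linear (sF sM) (*) \<phi>" "Vector_Spaces.linear (sF sM) (*) \<psi>"
    using assms(1,2) by (simp_all add: W_def)
  have "\<phi> b = \<psi> b" if "b \<in> set xs" for b
  proof -
    obtain k where "k < length xs" "b = xs ! k"
      using \<open>b \<in> set xs\<close> by (metis in_set_conv_nth)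
    then show ?thesis
      using fun_cong[OF assms(3), of k] by (simp add: coords_def)
  qed
  then show ?thesis
    using FC.linear_eq_on[OF linear] assms(4) Bset_span_xs by blast
qed

lemma coord_act_coords:
  assumes "\<phi> \<in> W" "b \<in> \<B>"
  shows "coord_act b (coords \<phi>) = coords (dual_act b \<phi>)"
proof -
  define \<psi> where "\<psi> = (SOME \<psi>. \<psi> \<in> W \<and> coords \<psi> = coords \<phi>)"
  have \<psi>: "\<psi> \<in> W" "coords \<psi> = coords \<phi>"
    using someI[of "\<lambda>\<psi>. \<psi> \<in> W \<and> coords \<psi> = coords \<phi>" \<phi>] assms(1) by (auto simp: \<psi>_def)
  have "\<psi> (b \<circ> xs ! k) = \<phi> (b \<circ> xs ! k)" if "k < length xs" for k
    using that xs_Bset \<open>b \<in> \<B>\<close> by (intro W_eq_on_Bset[OF \<psi>(1) assms(1) \<psi>(2)] Bset_comp) auto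
  then show ?thesis
    unfolding coord_act_def \<psi>_def[symmetric] by (simp add: coords_def dual_act_def fun_eq_iff)
qed

lemma coords_add: "coords (\<phi> + \<psi>) = coords \<phi> + coords \<psi>"
  by (simp add: coords_def fun_eq_iff)

lemma coords_scale: "coords (\<lambda>x. c * \<phi> x) = sV c (coords \<phi>)"
  by (simp add: coords_def fun_eq_iff sV_def)

lemma coords_zero: "coords (\<lambda>x. 0) = 0"
  by (simp add: coords_def fun_eq_iff)

lemma coords_W_subspace: "VS.subspace (coords ` W)"
  unfolding VS.subspace_def
proof (intro conjI ballI allI)
  show "0 \<in> coords ` W"
    using W_zero coords_zero by (auto intro: rev_image_eqI)
  show "u + v \<in> coords ` W" if "u \<in> coords ` W" "v \<in> coords ` W" for u v
    using that W_add by (auto simp flip: coords_add)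
  show "sV c u \<in> coords ` W" if "u \<in> coords ` W" for c u
    using that W_scale by (auto simp flip: coords_scale)
qed

lemma coords_W_finite_span: "coords ` W \<subseteq> VS.span ((\<lambda>k n. if n = k then 1 else 0) ` {..<length xs})"
proof
  fix w assume "w \<in> coords ` W"
  then obtain \<phi> where w: "w = coords \<phi>"
    by blast
  have "w = (\<Sum>k<length xs. sV (\<phi> (xs ! k)) (\<lambda>n. if n = k then 1 else 0))"
    by (simp add: w coords_def sV_def fun_eq_iff sum_fun_apply if_distrib[of "\<lambda>z. _ * z"]
        cong: if_cong)
  also have "\<dots> \<in> VS.span ((\<lambda>k n. if n = k then 1 else 0) ` {..<length xs})"
    by (intro VS.span_sum VS.span_scale VS.span_base) auto
  finally show "w \<in> VS.span ((\<lambda>k n. if n = k then 1 else 0) ` {..<length xs})" .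
qed

lemma coord_act_coords_W: "b \<in> \<B> \<Longrightarrow> w \<in> coords ` W \<Longrightarrow> coord_act b w \<in> coords ` W"
  by (auto simp: coord_act_coords dual_act_W)

lemma p_annihilates_coords_W:
  assumes "w \<in> coords ` W"
  shows "coord_act p w = 0"
proof -
  obtain \<phi> where "\<phi> \<in> W" and w: "w = coords \<phi>"
    using assms by blast
  have "\<phi> (p \<circ> xs ! k) = 0" if "k < length xs" for k
    using \<open>\<phi> \<in> W\<close> p_comp_mem_BpB subsetD[OF xs_Bset nth_mem[OF that]] by (simp add: W_def)
  then show ?thesis
    using \<open>\<phi> \<in> W\<close> by (simp add: w coord_act_coords p_Bset coords_def dual_act_def fun_eq_iff)
qed

lemma B_lmodule_stable_subspace:
  assumes U: "VS.subspace U" "U \<subseteq> coords ` W" and stable: "\<forall>b\<in>\<B>. \<forall>u\<in>U. coord_act b u \<in> U"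
  shows "B_lmodule \<B> sM sV U coord_act"
  unfolding B_lmodule_def
proof (intro conjI ballI allI vector_space_sV U(1) stable[rule_format])
  fix b b' u assume b: "b \<in> \<B>" "b' \<in> \<B>" and "u \<in> U"
  then obtain \<phi> where "\<phi> \<in> W" and u: "u = coords \<phi>"
    using U(2) by blast
  then show "coord_act (b + b') u = coord_act b u + coord_act b' u"
    using b by (simp add: coord_act_coords Bset_add dual_act_add_left coords_add)
  show "coord_act (b' \<circ> b) u = coord_act b (coord_act b' u)"
    using b \<open>\<phi> \<in> W\<close> by (simp add: u coord_act_coords Bset_comp dual_act_comp dual_act_W)
next
  fix c b u assume b: "b \<in> \<B>" and "u \<in> U"
  then obtain \<phi> where "\<phi> \<in> W" and u: "u = coords \<phi>"
    using U(2) by blast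
  then show "coord_act (sF sM c b) u = sV c (coord_act b u)"
    using b by (simp add: coord_act_coords Bset_scale dual_act_scale_left coords_scale)
  have "coord_act b (sV c u) = coord_act b (coords (\<lambda>x. c * \<phi> x))"
    by (simp add: u coords_scale)
  also have "\<dots> = coords (dual_act b (\<lambda>x. c * \<phi> x))"
    using b \<open>\<phi> \<in> W\<close> by (simp add: coord_act_coords W_scale)
  also have "\<dots> = sV c (coord_act b u)"
    using b \<open>\<phi> \<in> W\<close> by (simp add: u coord_act_coords dual_act_scale_right coords_scale)
  finally show "coord_act b (sV c u) = sV c (coord_act b u)" .
next
  fix b u v assume b: "b \<in> \<B>" and "u \<in> U" "v \<in> U"
  then obtain \<phi> \<psi> where "\<phi> \<in> W" "\<psi> \<in> W" and u: "u = coords \<phi>" and v: "v = coords \<psi>"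
    using U(2) by blast
  have "coord_act b (u + v) = coord_act b (coords (\<phi> + \<psi>))"
    by (simp add: u v coords_add)
  also have "\<dots> = coords (dual_act b (\<phi> + \<psi>))"
    using b \<open>\<phi> \<in> W\<close> \<open>\<psi> \<in> W\<close> by (simp add: coord_act_coords W_add)
  also have "\<dots> = coord_act b u + coord_act b v"
    using b \<open>\<phi> \<in> W\<close> \<open>\<psi> \<in> W\<close> by (simp add: u v coord_act_coords dual_act_add_right coords_add)
  finally show "coord_act b (u + v) = coord_act b u + coord_act b v" .
next
  fix u assume "u \<in> U"
  then obtain \<phi> where "\<phi> \<in> W" and u: "u = coords \<phi>"
    using U(2) by blast
  then show "coord_act id u = u"
    by (simp add: coord_act_coords Bset_id dual_act_id)
qed

lemma coords_W_nonzero: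
  assumes "id \<notin> BpB"
  shows "coords ` W \<noteq> {0}"
proof -
  obtain BI where BI: "BI \<subseteq> BpB" "FS.independent BI" "BpB \<subseteq> FS.span BI"
    by (meson FS.basis_exists)
  have "FS.span BI \<subseteq> BpB"
    using FS.span_minimal[OF BI(1)] by (simp add: BpB_def)
  then have "FS.independent (insert id BI)"
    using assms FS.independent_insertI[OF _ BI(2)] by blast
  then obtain \<phi> where \<phi>: "Vector_Spaces.linear (sF sM) (*) \<phi>"
    and \<phi>_basis: "\<forall>x\<in>insert id BI. \<phi> x = (if x = id then 1 else 0)"
    using FC.linear_independent_extend[of _ "\<lambda>x. if x = id then 1 else 0"] by blast
  have "\<phi> b = 0" if "b \<in> BI" for b
    using \<phi>_basis that BI(1) assms by auto
  then have "\<phi> x = 0" if "x \<in> BpB" for x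
    using FC.linear_eq_0_on_span[OF \<phi>] BI(3) that by blast
  then have "\<phi> \<in> W"
    using \<phi> by (simp add: W_def)
  moreover have "coords \<phi> \<noteq> 0"
  proof
    assume "coords \<phi> = 0"
    then have "\<phi> id = 0"
      using W_eq_on_Bset[OF \<open>\<phi> \<in> W\<close> W_zero _ Bset_id] by (simp add: coords_zero)
    then show False
      using \<phi>_basis by simp
  qed
  ultimately show ?thesis
    by blast
qed

lemma id_mem_BpB: "id \<in> BpB"
proof (rule ccontr)
  assume "id \<notin> BpB"
  define stable where "stable U \<longleftrightarrow> VS.subspace U \<and> U \<subseteq> coords ` W
      \<and> (\<forall>b\<in>\<B>. \<forall>u\<in>U. coord_act b u \<in> U) \<and> U \<noteq> {0}" for U
  have "stable (coords ` W)"
    unfolding stable_def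
    using coords_W_subspace coord_act_coords_W coords_W_nonzero[OF \<open>id \<notin> BpB\<close>] by blast
  then obtain V where "stable V" and minimal: "\<And>U. stable U \<Longrightarrow> VS.dim V \<le> VS.dim U"
    using ex_has_least_nat[of stable _ VS.dim] by metis
  then have V: "VS.subspace V" "V \<subseteq> coords ` W" "\<forall>b\<in>\<B>. \<forall>u\<in>V. coord_act b u \<in> V" "V \<noteq> {0}"
    by (simp_all add: stable_def)
  have module: "B_lmodule \<B> sM sV V coord_act"
    using B_lmodule_stable_subspace V(1-3) .
  have "B_irreducible \<B> sV V coord_act"
    unfolding B_irreducible_def
  proof (intro conjI allI impI V(4))
    fix U assume U: "U \<subseteq> V \<and> VS.subspace U \<and> (\<forall>b\<in>\<B>. \<forall>u\<in>U. coord_act b u \<in> U)"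
    show "U = {0} \<or> U = V"
    proof (cases "U = {0}")
      case False
      then have "VS.dim V \<le> VS.dim U"
        using U V(2) by (intro minimal) (auto simp: stable_def)
      moreover have "V \<subseteq> VS.span ((\<lambda>k n. if n = k then 1 else 0) ` {..<length xs})"
        using V(2) coords_W_finite_span by blast
      ultimately show ?thesis
        using U V(1) VS.subspace_eq_if_dim_le[of U V] by auto
    qed simp
  qed
  then have "quotient_of_Bp \<B> sM p sV V coord_act"
    using generating module by (simp add: generating_def)
  then have "V \<subseteq> {0}"
    using quotient_of_Bp_annihilated[OF module] p_annihilates_coords_W V(2) by blast
  then show False
    using V(1,4) VS.subspace_0 by blast
qed

end

context generating_idempotent
begin

lemma full_decomposition:
  obtains K :: "('m \<Rightarrow> 'm) set" and bk ck where "full_idempotent sA sM act p K bk ck"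
proof -
  obtain G where "finite G" "G \<subseteq> \<B>" "\<B> \<subseteq> FS.span G"
    using Bset_finite_span by blast
  then obtain xs where "set xs \<subseteq> \<B>" "\<B> \<subseteq> FS.span (set xs)"
    using finite_list by metis
  then interpret spanning_list sA sM act p xs
    by unfold_locales
  obtain K :: "('m \<Rightarrow> 'm) set" and bk ck where "finite K"
    and "\<And>k. k \<in> K \<Longrightarrow> bk k \<in> \<B>" "\<And>k. k \<in> K \<Longrightarrow> ck k \<in> \<B>"
    and "\<And>\<xi>. id \<xi> = (\<Sum>k\<in>K. ck k (p (bk k \<xi>)))"
    using BpB_decomposition[OF id_mem_BpB] by blast
  then have "full_idempotent sA sM act p K bk ck"
    using p_Bset p_idem by unfold_locales simp_all
  then show ?thesis
    by (rule that)
qed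

end

theorem proposition11p5:
  fixes sA :: "complex \<Rightarrow> 'a::ring \<Rightarrow> 'a"
    and sM :: "complex \<Rightarrow> 'm::ab_group_add \<Rightarrow> 'm"
    and act :: "'a \<Rightarrow> 'm \<Rightarrow> 'm"
    and p :: "'m \<Rightarrow> 'm"
  assumes "cx_algebra sA" and "AUF sA"
    and "left_module sA sM act" and "coherent sM act"
    and "p \<in> Bset sM act" and "p \<circ> p = p"
    and "generating sM act p"
  shows "(\<forall>S\<in>End0_C sM act UNIV (Bset sM act).
            restrict_to (range p) S \<in> End0_C sM act (range p) (pBp sM act p))
     \<and> (\<forall>S1\<in>End0_C sM act UNIV (Bset sM act). \<forall>S2\<in>End0_C sM act UNIV (Bset sM act).
            restrict_to (range p) (S1 + S2) = restrict_to (range p) S1 + restrict_to (range p) S2)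
     \<and> (\<forall>c. \<forall>S\<in>End0_C sM act UNIV (Bset sM act).
            restrict_to (range p) (sF sM c S) = sF sM c (restrict_to (range p) S))
     \<and> bij_betw (restrict_to (range p)) (End0_C sM act UNIV (Bset sM act))
                 (End0_C sM act (range p) (pBp sM act p))"
proof -
  interpret generating_idempotent sA sM act p
    using assms by unfold_locales
  obtain K :: "('m \<Rightarrow> 'm) set" and bk ck where "full_idempotent sA sM act p K bk ck"
    by (rule full_decomposition)
  then interpret full_idempotent sA sM act p K bk ck .
  show ?thesis
    using restrict_End0_C restrict_bij_betw
    by (simp add: restrict_to_add restrict_to_scale)
qed

end
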